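(* Let $B_1,B_2$ be two commuting nilpotent operators on a finite-dimensional complex vector space $V$. Then there exist a nilpotent operator $B_2'$ on $V$ and a vector $w\in V$ such that (i) $B_2'$ commutes with $B_1$; (ii) every linear combination $\alpha B_2+\beta B_2'$ ($\alpha,\beta\in\mathbb{C}$) is nilpotent; (iii) $w$ is a cyclic vector for the pair $(B_1,B_2')$, i.e. there is no proper subspace of $V$ invariant under $B_1$ and $B_2'$ and containing $w$. *)

theory Defs
  imports "Jordan_Normal_Form.Matrix"
begin

text \<open>Operators on V = C^n are represented by n x n complex matrices (any n, including 0).\<close>

definition nilpotent_mat :: "'a::semiring_1 mat \<Rightarrow> bool" where
  "nilpotent_mat A \<longleftrightarrow> (\<exists>k. A ^\<^sub>m k = 0\<^sub>m (dim_row A) (dim_col A))"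

definition is_subspace :: "nat \<Rightarrow> complex vec set \<Rightarrow> bool" where
  "is_subspace n W \<longleftrightarrow> W \<subseteq> carrier_vec n \<and> 0\<^sub>v n \<in> W \<and>
     (\<forall>u\<in>W. \<forall>v\<in>W. u + v \<in> W) \<and> (\<forall>c. \<forall>v\<in>W. c \<cdot>\<^sub>v v \<in> W)"

definition invariant_under :: "complex mat \<Rightarrow> complex vec set \<Rightarrow> bool" where
  "invariant_under A W \<longleftrightarrow> (\<forall>v\<in>W. A *\<^sub>v v \<in> W)"

definition cyclic_vector_pair :: "nat \<Rightarrow> complex mat \<Rightarrow> complex mat \<Rightarrow> complex vec \<Rightarrow> bool" where
  "cyclic_vector_pair n A B w \<longleftrightarrow>
     \<not> (\<exists>W. is_subspace n W \<and> W \<noteq> carrier_vec n \<and> invariant_under A W \<and> invariant_under B W \<and> w \<in> W)"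

end

theory Submission
  imports Defs "Jordan_Normal_Form.Jordan_Normal_Form_Existence" "HOL-Library.Product_Lexorder"
begin

(* Conjugate B1 to its nilpotent Jordan form J. A matrix commuting with J preserves ker J, which
   is spanned by the block starts, and the part of this action between blocks of equal size is
   multiplicative on the commutant of J. Triangularizing that part of B2 within each block size and
   lifting the change of basis to a matrix commuting with J makes B2 strictly increasing for the
   lexicographic weight (position in the block, decreasing block size, block index) of the basis
   vectors.
   For B2' take the matrix that maps each block into the next lower one when blocks are ranked by
   size, aligned at the block ends. It commutes with J and also increases the weight, so every
   alpha B2 + beta B2' is nilpotent; and the last basis vector of the top-ranked block is cyclic for
   (J, B2'): B2' reaches the ends of all blocks and J walks down each block. *)

lemma similar_mat_wit_dims:
  assumes "similar_mat_wit A A' P Q" "P \<in> carrier_mat n n"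
  shows "A \<in> carrier_mat n n" "A' \<in> carrier_mat n n" "Q \<in> carrier_mat n n"
    "P * Q = 1\<^sub>m n" "Q * P = 1\<^sub>m n" "A = P * A' * Q"
proof -
  have "dim_row A = n" using similar_mat_witD(3)[OF refl assms(1)] assms(2) by simp
  from similar_mat_witD[OF this[symmetric] assms(1)] show
    "A \<in> carrier_mat n n" "A' \<in> carrier_mat n n" "Q \<in> carrier_mat n n"
    "P * Q = 1\<^sub>m n" "Q * P = 1\<^sub>m n" "A = P * A' * Q" by blast+
qed

lemma similar_mat_wit_intertwines:
  assumes "similar_mat_wit A A' P Q" "P \<in> carrier_mat n n"
  shows "A * P = P * A'"
proof -
  note w = similar_mat_wit_dims[OF assms]
  have "A * P = P * A' * (Q * P)"
    using w assms(2) by (simp add: assoc_mult_mat[of _ n n _ n _ n])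
  then show ?thesis using w assms(2) by simp
qed

lemma similar_mat_wit_mult:
  assumes A: "similar_mat_wit A A' P Q" and B: "similar_mat_wit B B' P Q" and P: "P \<in> carrier_mat n n"
  shows "similar_mat_wit (A * B) (A' * B') P Q"
proof -
  note a = similar_mat_wit_dims[OF A P] and b = similar_mat_wit_dims[OF B P]
  have cancel: "Q * (P * Y) = Y" if "Y \<in> carrier_mat n n" for Y
    using a(3,5) P that by (simp flip: assoc_mult_mat[of _ n n _ n _ n])
  have "A * B = P * (A' * B') * Q"
    using a b P by (simp add: assoc_mult_mat[of _ n n _ n _ n] cancel)
  then show ?thesis using a b P by (intro similar_mat_witI[of P Q n]) auto
qed

lemma similar_mat_wit_add:
  assumes A: "similar_mat_wit A A' P Q" and B: "similar_mat_wit B B' P Q" and P: "P \<in> carrier_mat n n"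
  shows "similar_mat_wit (A + B) (A' + B') P Q"
proof -
  note a = similar_mat_wit_dims[OF A P] and b = similar_mat_wit_dims[OF B P]
  have "A + B = P * (A' + B') * Q"
    using a b P by (simp add: mult_add_distrib_mat[of _ n n] add_mult_distrib_mat[of _ n n])
  then show ?thesis using a b P by (intro similar_mat_witI[of P Q n]) auto
qed

lemma similar_mat_wit_conj:
  assumes P: "P \<in> carrier_mat n n" and Q: "Q \<in> carrier_mat n n" and PQ: "P * Q = 1\<^sub>m n"
    and QP: "Q * P = 1\<^sub>m n" and X: "X \<in> carrier_mat n n"
  shows "similar_mat_wit X (Q * X * P) P Q"
proof -
  have cancel: "P * (Q * Y) = Y" if "Y \<in> carrier_mat n n" for Y
    using P Q PQ that by (simp flip: assoc_mult_mat[of _ n n _ n _ n])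
  have "X = P * (Q * X * P) * Q" using P Q X PQ by (simp add: assoc_mult_mat[of _ n n _ n _ n] cancel)
  then show ?thesis using P Q X PQ QP by (intro similar_mat_witI[of P Q n]) auto
qed

lemma nilpotent_mat_similar:
  assumes "similar_mat_wit A A' P Q"
  shows "nilpotent_mat A \<longleftrightarrow> nilpotent_mat A'"
proof -
  define n where "n = dim_row A"
  note w = similar_mat_witD[OF n_def assms]
  have pow: "A ^\<^sub>m k = P * A' ^\<^sub>m k * Q" "A' ^\<^sub>m k = Q * A ^\<^sub>m k * P" for k
    by (rule similar_mat_wit_pow_id[OF assms], rule similar_mat_wit_pow_id[OF similar_mat_wit_sym[OF assms]])
  have "A ^\<^sub>m k = 0\<^sub>m n n \<longleftrightarrow> A' ^\<^sub>m k = 0\<^sub>m n n" for k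
  proof
    assume "A ^\<^sub>m k = 0\<^sub>m n n"
    then show "A' ^\<^sub>m k = 0\<^sub>m n n" unfolding pow(2) using w(6,7) by simp
  next
    assume "A' ^\<^sub>m k = 0\<^sub>m n n"
    then show "A ^\<^sub>m k = 0\<^sub>m n n" unfolding pow(1) using w(6,7) by simp
  qed
  then show ?thesis using w unfolding nilpotent_mat_def by auto
qed

lemma similar_mat_wit_commute:
  assumes A: "similar_mat_wit A A' P Q" and B: "similar_mat_wit B B' P Q" and P: "P \<in> carrier_mat n n"
  shows "A * B = B * A \<longleftrightarrow> A' * B' = B' * A'"
proof -
  note AB = similar_mat_wit_mult[OF A B P] and BA = similar_mat_wit_mult[OF B A P]
  have Q: "Q \<in> carrier_mat n n" using similar_mat_wit_dims[OF A P] by simp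
  have ab: "A * B = P * (A' * B') * Q" and ba: "B * A = P * (B' * A') * Q"
    using similar_mat_wit_dims(6)[OF AB P] similar_mat_wit_dims(6)[OF BA P] .
  have ab': "A' * B' = Q * (A * B) * P" and ba': "B' * A' = Q * (B * A) * P"
    using similar_mat_wit_dims(6)[OF similar_mat_wit_sym[OF AB] Q]
      similar_mat_wit_dims(6)[OF similar_mat_wit_sym[OF BA] Q] .
  show ?thesis
  proof
    assume "A * B = B * A"
    then show "A' * B' = B' * A'" unfolding ab' ba' by simp
  next
    assume "A' * B' = B' * A'"
    then show "A * B = B * A" unfolding ab ba by simp
  qed
qed

lemma subspace_eq_carrier_if_unit_vecs:
  assumes W: "is_subspace n W" and units: "\<And>i. i < n \<Longrightarrow> unit_vec n i \<in> W"
  shows "W = carrier_vec n"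
proof
  show "W \<subseteq> carrier_vec n" using W unfolding is_subspace_def by auto
  show "carrier_vec n \<subseteq> W"
  proof
    fix v :: "complex vec" assume v: "v \<in> carrier_vec n"
    have "vec n (\<lambda>i. if i < m then v $ i else 0) \<in> W" if "m \<le> n" for m
      using that
    proof (induction m)
      case 0
      have "vec n (\<lambda>i. if i < 0 then v $ i else 0) = 0\<^sub>v n" by auto
      then show ?case using W unfolding is_subspace_def by auto
    next
      case (Suc m)
      have "vec n (\<lambda>i. if i < Suc m then v $ i else 0) =
          vec n (\<lambda>i. if i < m then v $ i else 0) + v $ m \<cdot>\<^sub>v unit_vec n m"
        by (rule eq_vecI) (auto simp: unit_vec_def less_Suc_eq)
      moreover have "v $ m \<cdot>\<^sub>v unit_vec n m \<in> W" using W units[of m] Suc.prems unfolding is_subspace_def by auto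
      ultimately show ?case using Suc W unfolding is_subspace_def by auto
    qed
    moreover have "vec n (\<lambda>i. if i < n then v $ i else 0) = v" using v by (intro eq_vecI) auto
    ultimately show "v \<in> W" by (metis order_refl)
  qed
qed

lemma mult_mat_vec_unit_vec:
  fixes A :: "'a :: comm_ring_1 mat"
  assumes A: "A \<in> carrier_mat n n" and j: "j < n"
  shows "A *\<^sub>v unit_vec n j = vec n (\<lambda>i. A $$ (i, j))"
  by (rule eq_vecI) (use A j scalar_prod_right_unit[OF j] in \<open>auto simp: row_def\<close>)

lemma cyclic_vector_pair_dim_0: "cyclic_vector_pair 0 A C w"
proof -
  have "W = carrier_vec 0" if "is_subspace 0 W" for W
  proof
    show "W \<subseteq> carrier_vec 0" using that unfolding is_subspace_def by simp
    show "carrier_vec 0 \<subseteq> W"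
    proof
      fix v :: "complex vec" assume "v \<in> carrier_vec 0"
      then have "v = 0\<^sub>v 0" by (intro eq_vecI) auto
      then show "v \<in> W" using that unfolding is_subspace_def by simp
    qed
  qed
  then show ?thesis unfolding cyclic_vector_pair_def by blast
qed

lemma is_subspace_preimage:
  assumes W: "is_subspace n W" and P: "P \<in> carrier_mat n n"
  shows "is_subspace n {v \<in> carrier_vec n. P *\<^sub>v v \<in> W}"
  unfolding is_subspace_def
proof (intro conjI ballI allI)
  have "P *\<^sub>v 0\<^sub>v n = 0\<^sub>v n" by (rule eq_vecI) (use P in \<open>auto simp: scalar_prod_def\<close>)
  then show "0\<^sub>v n \<in> {v \<in> carrier_vec n. P *\<^sub>v v \<in> W}" using W unfolding is_subspace_def by auto
  show "u + v \<in> {v \<in> carrier_vec n. P *\<^sub>v v \<in> W}" if "u \<in> {v \<in> carrier_vec n. P *\<^sub>v v \<in> W}"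
    "v \<in> {v \<in> carrier_vec n. P *\<^sub>v v \<in> W}" for u v
    using that W P unfolding is_subspace_def by (auto simp: mult_add_distrib_mat_vec)
  show "c \<cdot>\<^sub>v v \<in> {v \<in> carrier_vec n. P *\<^sub>v v \<in> W}" if "v \<in> {v \<in> carrier_vec n. P *\<^sub>v v \<in> W}" for c v
    using that W P unfolding is_subspace_def by (auto simp: mult_mat_vec)
qed auto

lemma invariant_under_preimage:
  assumes X: "similar_mat_wit X X' P Q" and P: "P \<in> carrier_mat n n" and inv: "invariant_under X W"
  shows "invariant_under X' {v \<in> carrier_vec n. P *\<^sub>v v \<in> W}"
  unfolding invariant_under_def
proof
  fix v assume "v \<in> {v \<in> carrier_vec n. P *\<^sub>v v \<in> W}"
  then have v: "v \<in> carrier_vec n" and Pv: "P *\<^sub>v v \<in> W" by auto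
  have Xc: "X \<in> carrier_mat n n" and X'c: "X' \<in> carrier_mat n n" using similar_mat_wit_dims[OF X P] by auto
  have "P *\<^sub>v (X' *\<^sub>v v) = (P * X') *\<^sub>v v" using assoc_mult_mat_vec[OF P X'c v] by simp
  also have "\<dots> = (X * P) *\<^sub>v v" using similar_mat_wit_intertwines[OF X P] by simp
  also have "\<dots> = X *\<^sub>v (P *\<^sub>v v)" using assoc_mult_mat_vec[OF Xc P v] .
  finally have "P *\<^sub>v (X' *\<^sub>v v) \<in> W" using inv Pv unfolding invariant_under_def by simp
  then show "X' *\<^sub>v v \<in> {v \<in> carrier_vec n. P *\<^sub>v v \<in> W}" using X'c v by simp
qed

lemma cyclic_vector_pair_similar:
  assumes A: "similar_mat_wit A A' P Q" and C: "similar_mat_wit C C' P Q" and P: "P \<in> carrier_mat n n"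
    and w: "w \<in> carrier_vec n" and cyc: "cyclic_vector_pair n A' C' w"
  shows "cyclic_vector_pair n A C (P *\<^sub>v w)"
  unfolding cyclic_vector_pair_def
proof
  assume "\<exists>W. is_subspace n W \<and> W \<noteq> carrier_vec n \<and> invariant_under A W \<and> invariant_under C W \<and> P *\<^sub>v w \<in> W"
  then obtain W where W: "is_subspace n W" and proper: "W \<noteq> carrier_vec n"
    and invA: "invariant_under A W" and invC: "invariant_under C W" and Pw: "P *\<^sub>v w \<in> W" by blast
  note a = similar_mat_wit_dims[OF A P]
  let ?W' = "{v \<in> carrier_vec n. P *\<^sub>v v \<in> W}"
  have "?W' \<noteq> carrier_vec n"
  proof
    assume full: "?W' = carrier_vec n"
    have "u \<in> W" if u: "u \<in> carrier_vec n" for u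
    proof -
      have "Q *\<^sub>v u \<in> ?W'" using full a(3) u by simp
      moreover have "P *\<^sub>v (Q *\<^sub>v u) = u" using assoc_mult_mat_vec[OF P a(3) u] a(4) u by simp
      ultimately show ?thesis by simp
    qed
    with W proper show False unfolding is_subspace_def by auto
  qed
  then show False
    using cyc is_subspace_preimage[OF W P] invariant_under_preimage[OF A P invA]
      invariant_under_preimage[OF C P invC] w Pw
    unfolding cyclic_vector_pair_def by blast
qed

definition cyclic_partner :: "nat \<Rightarrow> complex mat \<Rightarrow> complex mat \<Rightarrow> complex mat \<Rightarrow> complex vec \<Rightarrow> bool" where
  "cyclic_partner n A X C w \<longleftrightarrow> C \<in> carrier_mat n n \<and> w \<in> carrier_vec n \<and> nilpotent_mat C \<and>
     A * C = C * A \<and> (\<forall>\<alpha> \<beta> :: complex. nilpotent_mat (\<alpha> \<cdot>\<^sub>m X + \<beta> \<cdot>\<^sub>m C)) \<and> cyclic_vector_pair n A C w"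

lemma cyclic_partner_similar:
  assumes A: "similar_mat_wit A A' P Q" and X: "similar_mat_wit X X' P Q" and P: "P \<in> carrier_mat n n"
    and partner: "cyclic_partner n A' X' C' w'"
  shows "cyclic_partner n A X (P * C' * Q) (P *\<^sub>v w')"
proof -
  note a = similar_mat_wit_dims[OF A P]
  have C': "C' \<in> carrier_mat n n" and w': "w' \<in> carrier_vec n"
    using partner unfolding cyclic_partner_def by auto
  have C: "similar_mat_wit (P * C' * Q) C' P Q"
    using a C' P by (intro similar_mat_witI[of P Q n]) auto
  have "nilpotent_mat (P * C' * Q)"
    using partner nilpotent_mat_similar[OF C] unfolding cyclic_partner_def by simp
  moreover have "A * (P * C' * Q) = P * C' * Q * A"
    using partner similar_mat_wit_commute[OF A C P] unfolding cyclic_partner_def by simp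
  moreover have "nilpotent_mat (\<alpha> \<cdot>\<^sub>m X + \<beta> \<cdot>\<^sub>m (P * C' * Q))" for \<alpha> \<beta>
  proof -
    have "similar_mat_wit (\<alpha> \<cdot>\<^sub>m X + \<beta> \<cdot>\<^sub>m (P * C' * Q)) (\<alpha> \<cdot>\<^sub>m X' + \<beta> \<cdot>\<^sub>m C') P Q"
      by (intro similar_mat_wit_add[OF _ _ P] similar_mat_wit_smult X C)
    from nilpotent_mat_similar[OF this] show ?thesis using partner unfolding cyclic_partner_def by simp
  qed
  moreover have "cyclic_vector_pair n A (P * C' * Q) (P *\<^sub>v w')"
    using partner cyclic_vector_pair_similar[OF A C P w'] unfolding cyclic_partner_def by simp
  ultimately show ?thesis using a C' w' P unfolding cyclic_partner_def by auto
qed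


fun block_of :: "nat list \<Rightarrow> nat \<Rightarrow> nat" where
  "block_of [] x = 0"
| "block_of (m # ms) x = (if x < m then 0 else Suc (block_of ms (x - m)))"

fun pos_in_block :: "nat list \<Rightarrow> nat \<Rightarrow> nat" where
  "pos_in_block [] x = x"
| "pos_in_block (m # ms) x = (if x < m then x else pos_in_block ms (x - m))"

definition block_start :: "nat list \<Rightarrow> nat \<Rightarrow> nat" where
  "block_start ms b = sum_list (take b ms)"

lemma block_start_0 [simp]: "block_start ms 0 = 0"
  by (simp add: block_start_def)

lemma block_start_Cons_Suc [simp]: "block_start (m # ms) (Suc b) = m + block_start ms b"
  by (simp add: block_start_def)

lemma block_decomposition:
  "x < sum_list ms \<Longrightarrow> block_of ms x < length ms \<and> pos_in_block ms x < ms ! block_of ms x \<and>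
     block_start ms (block_of ms x) + pos_in_block ms x = x"
proof (induction ms arbitrary: x)
  case (Cons m ms)
  show ?case
  proof (cases "x < m")
    case False
    with Cons.prems have "x - m < sum_list ms" by simp
    from Cons.IH[OF this] False show ?thesis by auto
  qed simp
qed simp

lemma block_of_block_start_add:
  "b < length ms \<Longrightarrow> p < ms ! b \<Longrightarrow> block_of ms (block_start ms b + p) = b \<and>
     pos_in_block ms (block_start ms b + p) = p \<and> block_start ms b + p < sum_list ms"
proof (induction ms arbitrary: b)
  case (Cons m ms)
  show ?case
  proof (cases b)
    case (Suc b')
    with Cons.prems have "b' < length ms" "p < ms ! b'" by auto
    from Cons.IH[OF this] Suc show ?thesis by simp
  qed (use Cons.prems in simp)
qed simp

lemma sum_lessThan_sum_list_blocks:
  "(\<Sum>x<sum_list ms. f x) = (\<Sum>b<length ms. \<Sum>p<ms ! b. f (block_start ms b + p))"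
proof (induction ms arbitrary: f)
  case (Cons m ms)
  have "(\<Sum>x<sum_list (m # ms). f x) = (\<Sum>x<m. f x) + (\<Sum>x<sum_list ms. f (m + x))"
    by (simp add: sum.atLeastLessThan_concat[symmetric] lessThan_atLeast0 sum.shift_bounds_nat_ivl add.commute)
      (metis add.commute sum.atLeastLessThan_concat le_add2 sum.shift_bounds_nat_ivl add_0)
  also have "\<dots> = (\<Sum>b<length (m # ms). \<Sum>p<(m # ms) ! b. f (block_start (m # ms) b + p))"
    unfolding Cons.IH[of "\<lambda>x. f (m + x)"] length_Cons sum.lessThan_Suc_shift by (simp add: add.assoc)
  finally show ?case .
qed simp

lemma jordan_matrix_index:
  fixes bl :: "(nat \<times> 'a :: comm_ring_1) list"
  assumes "i < sum_list (map fst bl)" "j < sum_list (map fst bl)"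
  shows "jordan_matrix bl $$ (i, j) =
    (if block_of (map fst bl) i = block_of (map fst bl) j then
       (if i = j then snd (bl ! block_of (map fst bl) i) else if j = Suc i then 1 else 0)
     else 0)"
  using assms
proof (induction bl arbitrary: i j)
  case (Cons na bl)
  obtain n a where na: "na = (n, a)" by force
  let ?n' = "sum_list (map fst bl)"
  have split: "jordan_matrix ((n, a) # bl) =
      four_block_mat (jordan_block n a) (0\<^sub>m n ?n') (0\<^sub>m ?n' n) (jordan_matrix bl)"
    by (rule jordan_matrix_Cons)
  from Cons.prems na have i: "i < n + ?n'" and j: "j < n + ?n'" by auto
  consider "i < n" | "\<not> i < n" "j < n" | "\<not> i < n" "\<not> j < n" by blast
  then show ?case
  proof cases
    case 3
    then have "i - n < ?n'" "j - n < ?n'" using i j by auto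
    from Cons.IH[OF this] show ?thesis using i j 3 unfolding na split by auto
  qed (use i j in \<open>auto simp: na split\<close>)
qed simp

definition nil_jordan_mat :: "nat list \<Rightarrow> 'a :: {zero, one} mat" where
  "nil_jordan_mat ms = jordan_matrix (map (\<lambda>m. (m, 0)) ms)"

lemma map_fst_zero_blocks: "map fst (map (\<lambda>m. (m, 0)) ms) = ms"
  by (induction ms) auto

section \<open>Nilpotent Jordan matrices and their commutant\<close>

locale nilpotent_jordan =
  fixes ms :: "nat list"
  assumes block_sizes_pos: "\<And>m. m \<in> set ms \<Longrightarrow> 0 < m"
begin

abbreviation "ndim \<equiv> sum_list ms"
abbreviation "nblocks \<equiv> length ms"
abbreviation "blk \<equiv> block_of ms"
abbreviation "pos \<equiv> pos_in_block ms"
abbreviation "bsize b \<equiv> ms ! b"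
abbreviation "idx b p \<equiv> block_start ms b + p"
abbreviation J :: "complex mat" where "J \<equiv> nil_jordan_mat ms"

lemma bsize_pos: "b < nblocks \<Longrightarrow> 0 < bsize b"
  using block_sizes_pos by auto

lemma index_decomposition: "x < ndim \<Longrightarrow> blk x < nblocks \<and> pos x < bsize (blk x) \<and> idx (blk x) (pos x) = x"
  by (rule block_decomposition)

lemma blk_pos_idx: "b < nblocks \<Longrightarrow> p < bsize b \<Longrightarrow> blk (idx b p) = b \<and> pos (idx b p) = p \<and> idx b p < ndim"
  by (rule block_of_block_start_add)

lemma idx_eq_iff:
  "b < nblocks \<Longrightarrow> p < bsize b \<Longrightarrow> b' < nblocks \<Longrightarrow> p' < bsize b' \<Longrightarrow> idx b p = idx b' p' \<longleftrightarrow> b = b' \<and> p = p'"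
  using blk_pos_idx by metis

lemma index_eq_iff: "x < ndim \<Longrightarrow> y < ndim \<Longrightarrow> x = y \<longleftrightarrow> blk x = blk y \<and> pos x = pos y"
  using index_decomposition by metis

lemma block_start_facts: "b < nblocks \<Longrightarrow> idx b 0 < ndim \<and> blk (idx b 0) = b \<and> pos (idx b 0) = 0"
  using blk_pos_idx[of b 0] bsize_pos by auto

lemma pred_index:
  assumes y: "y < ndim" and p: "0 < pos y"
  shows "y - 1 < ndim \<and> blk (y - 1) = blk y \<and> pos (y - 1) = pos y - 1"
proof -
  from index_decomposition[OF y] have b: "blk y < nblocks" "pos y - 1 < bsize (blk y)"
    and e: "idx (blk y) (pos y) = y" by auto
  have "idx (blk y) (pos y - 1) = y - 1" using e p by linarith
  with blk_pos_idx[OF b] show ?thesis by metis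
qed

lemma succ_index:
  assumes x: "x < ndim" and p: "Suc (pos x) < bsize (blk x)"
  shows "Suc x < ndim \<and> blk (Suc x) = blk x \<and> pos (Suc x) = Suc (pos x)"
proof -
  from index_decomposition[OF x] have b: "blk x < nblocks" and e: "idx (blk x) (pos x) = x" by auto
  have "idx (blk x) (Suc (pos x)) = Suc x" using e by linarith
  with blk_pos_idx[OF b p] show ?thesis by metis
qed

lemma J_carrier [simp]: "J \<in> carrier_mat ndim ndim"
  using jordan_matrix_carrier[of "map (\<lambda>m. (m, 0 :: complex)) ms"]
  unfolding nil_jordan_mat_def map_fst_zero_blocks .

lemma J_dims [simp]: "dim_row J = ndim" "dim_col J = ndim"
  using carrier_matD[OF J_carrier] by auto

lemma J_index:
  assumes i: "i < ndim" and j: "j < ndim"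
  shows "J $$ (i, j) = (if blk i = blk j \<and> pos j = Suc (pos i) then 1 else 0)"
proof -
  have "(i = j \<longleftrightarrow> pos i = pos j) \<and> (j = Suc i \<longleftrightarrow> pos j = Suc (pos i))" if "blk i = blk j"
    using index_decomposition[OF i] index_decomposition[OF j] that by (metis add_Suc_right add_left_cancel)
  then show ?thesis
    using jordan_matrix_index[of i "map (\<lambda>m. (m, 0 :: complex)) ms" j, unfolded map_fst_zero_blocks]
      i j index_decomposition[OF i]
    unfolding nil_jordan_mat_def by auto
qed

lemma J_index_pred:
  assumes l: "l < ndim" and j: "j < ndim"
  shows "J $$ (l, j) = (if 0 < pos j \<and> l = j - 1 then 1 else 0)"
proof -
  have "blk l = blk j \<and> pos j = Suc (pos l) \<longleftrightarrow> 0 < pos j \<and> l = j - 1"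
  proof
    assume "blk l = blk j \<and> pos j = Suc (pos l)"
    then show "0 < pos j \<and> l = j - 1"
      using index_decomposition[OF l] index_decomposition[OF j] by (metis add_Suc_right diff_Suc_1 zero_less_Suc)
  qed (use pred_index[OF j] in auto)
  then show ?thesis using J_index[OF l j] by simp
qed

lemma J_index_succ:
  assumes i: "i < ndim" and l: "l < ndim"
  shows "J $$ (i, l) = (if Suc (pos i) < bsize (blk i) \<and> l = Suc i then 1 else 0)"
proof -
  have "blk i = blk l \<and> pos l = Suc (pos i) \<longleftrightarrow> Suc (pos i) < bsize (blk i) \<and> l = Suc i"
  proof
    assume "blk i = blk l \<and> pos l = Suc (pos i)"
    then show "Suc (pos i) < bsize (blk i) \<and> l = Suc i"
      using index_decomposition[OF i] index_decomposition[OF l] by (metis add_Suc_right)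
  qed (use succ_index[OF i] in auto)
  then show ?thesis using J_index[OF i l] by simp
qed

lemma mult_J_index:
  assumes X: "X \<in> carrier_mat ndim ndim" and i: "i < ndim" and j: "j < ndim"
  shows "(X * J) $$ (i, j) = (if 0 < pos j then X $$ (i, j - 1) else 0)"
proof -
  have "(X * J) $$ (i, j) = (\<Sum>l<ndim. X $$ (i, l) * J $$ (l, j))"
    using X i j by (simp add: scalar_prod_def lessThan_atLeast0)
  also have "\<dots> = (\<Sum>l<ndim. if l = j - 1 then (if 0 < pos j then X $$ (i, j - 1) else 0) else 0)"
    by (rule sum.cong[OF refl]) (use j in \<open>auto simp: J_index_pred\<close>)
  also have "\<dots> = (if 0 < pos j then X $$ (i, j - 1) else 0)"
    using j by (simp add: sum.delta)
  finally show ?thesis .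
qed

lemma J_mult_index:
  assumes X: "X \<in> carrier_mat ndim ndim" and i: "i < ndim" and j: "j < ndim"
  shows "(J * X) $$ (i, j) = (if Suc (pos i) < bsize (blk i) then X $$ (Suc i, j) else 0)"
proof -
  have "(J * X) $$ (i, j) = (\<Sum>l<ndim. J $$ (i, l) * X $$ (l, j))"
    using X i j by (simp add: scalar_prod_def lessThan_atLeast0)
  also have "\<dots> = (\<Sum>l<ndim. if l = Suc i then (if Suc (pos i) < bsize (blk i) then X $$ (Suc i, j) else 0) else 0)"
    by (rule sum.cong[OF refl]) (use i in \<open>auto simp: J_index_succ\<close>)
  also have "\<dots> = (if Suc (pos i) < bsize (blk i) then X $$ (Suc i, j) else 0)"
    using succ_index[OF i] by (simp add: sum.delta)
  finally show ?thesis .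
qed

definition commutes_J :: "complex mat \<Rightarrow> bool" where
  "commutes_J X \<longleftrightarrow> X \<in> carrier_mat ndim ndim \<and> X * J = J * X"

lemma commutes_J_carrier: "commutes_J X \<Longrightarrow> X \<in> carrier_mat ndim ndim"
  unfolding commutes_J_def by simp

lemma commutes_J_one: "commutes_J (1\<^sub>m ndim)"
  unfolding commutes_J_def by simp

lemma commutes_J_mult:
  assumes X: "commutes_J X" and Y: "commutes_J Y"
  shows "commutes_J (X * Y)"
proof -
  have Xc: "X \<in> carrier_mat ndim ndim" and Yc: "Y \<in> carrier_mat ndim ndim"
    and XJ: "X * J = J * X" and YJ: "Y * J = J * Y"
    using X Y unfolding commutes_J_def by auto
  have "X * Y * J = X * (Y * J)" using assoc_mult_mat[OF Xc Yc J_carrier] .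
  also have "\<dots> = X * J * Y" using assoc_mult_mat[OF Xc J_carrier Yc] by (simp add: YJ)
  also have "\<dots> = J * (X * Y)" using assoc_mult_mat[OF J_carrier Xc Yc] by (simp add: XJ)
  finally show ?thesis unfolding commutes_J_def using Xc Yc by simp
qed

lemma commutes_J_pow: "commutes_J X \<Longrightarrow> commutes_J (X ^\<^sub>m t)"
  by (induction t) (auto simp: commutes_J_mult commutes_J_one dest: commutes_J_carrier)

lemma commutant_shift:
  assumes X: "commutes_J X" and b: "b < nblocks" "p < bsize b" and b': "b' < nblocks" "p' < bsize b'"
  shows "(if 0 < p then X $$ (idx b' p', idx b (p - 1)) else 0) =
         (if Suc p' < bsize b' then X $$ (idx b' (Suc p'), idx b p) else 0)"
proof -
  have Xc: "X \<in> carrier_mat ndim ndim" and XJ: "X * J = J * X" using X unfolding commutes_J_def by auto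
  have i: "idx b' p' < ndim" and j: "idx b p < ndim" using blk_pos_idx b b' by auto
  have "(X * J) $$ (idx b' p', idx b p) = (J * X) $$ (idx b' p', idx b p)" using XJ by simp
  then show ?thesis unfolding mult_J_index[OF Xc i j] J_mult_index[OF Xc i j]
    using blk_pos_idx[OF b] blk_pos_idx[OF b'] by (cases p) (auto simp: add.commute)
qed

lemma commutant_pos_le:
  assumes X: "commutes_J X" and b: "b < nblocks" "p < bsize b" and b': "b' < nblocks" "p' < bsize b'"
    and ne: "X $$ (idx b' p', idx b p) \<noteq> 0"
  shows "p' \<le> p"
  using b(2) b'(2) ne
proof (induction p arbitrary: p')
  case 0
  show ?case
  proof (rule ccontr)
    assume "\<not> p' \<le> 0"
    then obtain q where q: "p' = Suc q" by (cases p') auto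
    from commutant_shift[OF X b(1) 0(1) b'(1), of q] q 0 show False by auto
  qed
next
  case (Suc p)
  show ?case
  proof (rule ccontr)
    assume "\<not> p' \<le> Suc p"
    then obtain q where q: "p' = Suc q" "p < q" by (cases p') auto
    from commutant_shift[OF X b(1) Suc(2) b'(1), of q] q Suc(3,4)
    have "X $$ (idx b' q, idx b p) \<noteq> 0" by auto
    from Suc.IH[OF _ _ this] Suc(2) q Suc(3) show False by auto
  qed
qed

lemma commutant_dist_le:
  assumes X: "commutes_J X" and b: "b < nblocks" "p < bsize b" and b': "b' < nblocks" "p' < bsize b'"
    and ne: "X $$ (idx b' p', idx b p) \<noteq> 0"
  shows "bsize b - p \<le> bsize b' - p'"
  using b(2) b'(2) ne
proof (induction "bsize b' - p'" arbitrary: p p' rule: less_induct)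
  case less
  show ?case
  proof (rule ccontr)
    assume c: "\<not> bsize b - p \<le> bsize b' - p'"
    then have p1: "Suc p < bsize b" using less.prems(2) by auto
    from commutant_shift[OF X b(1) p1 b'(1) less.prems(2)] less.prems(3)
    have p'1: "Suc p' < bsize b'" and ne': "X $$ (idx b' (Suc p'), idx b (Suc p)) \<noteq> 0"
      by (auto split: if_splits)
    have "bsize b - Suc p \<le> bsize b' - Suc p'"
      by (rule less.hyps[OF _ p1 p'1 ne']) (use p'1 in simp)
    with c p1 p'1 show False by linarith
  qed
qed

lemma commutant_toeplitz:
  assumes X: "commutes_J X" and b: "b < nblocks" "p < bsize b" and b': "b' < nblocks" "p < bsize b'"
  shows "X $$ (idx b' p, idx b p) = X $$ (idx b' 0, idx b 0)"
  using b(2) b'(2)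
proof (induction p)
  case (Suc p)
  from commutant_shift[OF X b(1) Suc(2) b'(1), of p] Suc(3)
  have "X $$ (idx b' p, idx b p) = X $$ (idx b' (Suc p), idx b (Suc p))" by auto
  with Suc show ?case by auto
qed simp

lemma mult_index_blocks:
  assumes X: "X \<in> carrier_mat ndim ndim" and Y: "Y \<in> carrier_mat ndim ndim" and i: "i < ndim" and j: "j < ndim"
  shows "(X * Y) $$ (i, j) = (\<Sum>c<nblocks. \<Sum>q<bsize c. X $$ (i, idx c q) * Y $$ (idx c q, j))"
proof -
  have "(X * Y) $$ (i, j) = (\<Sum>l<ndim. X $$ (i, l) * Y $$ (l, j))"
    using X Y i j by (simp add: scalar_prod_def lessThan_atLeast0)
  then show ?thesis by (simp only: sum_lessThan_sum_list_blocks)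
qed

text \<open>The matrix of X on ker J, which is spanned by the block starts, reduced to pairs of blocks
  of equal size (the associated graded of the filtration of ker J by block size). By
  commutant_pos_le and commutant_dist_le this reduction is multiplicative on the commutant of J.\<close>

definition head_mat :: "complex mat \<Rightarrow> complex mat" where
  "head_mat X = mat nblocks nblocks (\<lambda>(b', b). if bsize b' = bsize b then X $$ (idx b' 0, idx b 0) else 0)"

lemma head_mat_carrier [simp]: "head_mat X \<in> carrier_mat nblocks nblocks"
  and head_mat_dims [simp]: "dim_row (head_mat X) = nblocks" "dim_col (head_mat X) = nblocks"
  unfolding head_mat_def by auto

lemma head_mat_index:
  "b' < nblocks \<Longrightarrow> b < nblocks \<Longrightarrow>
     head_mat X $$ (b', b) = (if bsize b' = bsize b then X $$ (idx b' 0, idx b 0) else 0)"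
  unfolding head_mat_def by auto

lemma head_mat_mult:
  assumes X: "commutes_J X" and Y: "commutes_J Y"
  shows "head_mat (X * Y) = head_mat X * head_mat Y"
proof (rule eq_matI)
  fix b' b assume "b' < dim_row (head_mat X * head_mat Y)" "b < dim_col (head_mat X * head_mat Y)"
  then have b': "b' < nblocks" and b: "b < nblocks" by auto
  have s0: "0 < bsize b" "0 < bsize b'" using bsize_pos b b' by auto
  have prod: "(head_mat X * head_mat Y) $$ (b', b) = (\<Sum>c<nblocks. head_mat X $$ (b', c) * head_mat Y $$ (c, b))"
    using b b' by (simp add: scalar_prod_def lessThan_atLeast0)
  show "head_mat (X * Y) $$ (b', b) = (head_mat X * head_mat Y) $$ (b', b)"
  proof (cases "bsize b' = bsize b")
    case False
    then show ?thesis unfolding prod using b b' by (simp add: head_mat_index)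
  next
    case True
    have i: "idx b' 0 < ndim" and j: "idx b 0 < ndim" using block_start_facts b b' by auto
    have entry: "X $$ (idx b' 0, idx c q) * Y $$ (idx c q, idx b 0) =
        (if q = 0 then head_mat X $$ (b', c) * head_mat Y $$ (c, b) else 0)"
      if c: "c < nblocks" and q: "q < bsize c" for c q
    proof (cases "X $$ (idx b' 0, idx c q) = 0 \<or> Y $$ (idx c q, idx b 0) = 0")
      case False
      then have nx: "X $$ (idx b' 0, idx c q) \<noteq> 0" and ny: "Y $$ (idx c q, idx b 0) \<noteq> 0" by auto
      have q0: "q = 0" using commutant_pos_le[OF Y b s0(1) c q ny] by simp
      have "bsize c = bsize b"
        using commutant_dist_le[OF Y b s0(1) c q ny] commutant_dist_le[OF X c q b' s0(2) nx] q0 True by auto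
      then show ?thesis using q0 True c b b' by (simp add: head_mat_index)
    qed (use True c b b' in \<open>auto simp: head_mat_index\<close>)
    have "head_mat (X * Y) $$ (b', b) = (X * Y) $$ (idx b' 0, idx b 0)"
      using True b b' by (simp add: head_mat_index)
    also have "\<dots> = (\<Sum>c<nblocks. \<Sum>q<bsize c. X $$ (idx b' 0, idx c q) * Y $$ (idx c q, idx b 0))"
      by (rule mult_index_blocks[OF commutes_J_carrier[OF X] commutes_J_carrier[OF Y] i j])
    also have "\<dots> = (\<Sum>c<nblocks. \<Sum>q<bsize c. if q = 0 then head_mat X $$ (b', c) * head_mat Y $$ (c, b) else 0)"
      by (intro sum.cong refl entry) auto
    also have "\<dots> = (\<Sum>c<nblocks. head_mat X $$ (b', c) * head_mat Y $$ (c, b))"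
      using bsize_pos by (intro sum.cong) auto
    finally show ?thesis unfolding prod .
  qed
qed auto

lemma head_mat_one: "head_mat (1\<^sub>m ndim) = 1\<^sub>m nblocks"
proof (rule eq_matI)
  fix b' b assume "b' < dim_row (1\<^sub>m nblocks :: complex mat)" "b < dim_col (1\<^sub>m nblocks :: complex mat)"
  then have b': "b' < nblocks" and b: "b < nblocks" by auto
  show "head_mat (1\<^sub>m ndim) $$ (b', b) = 1\<^sub>m nblocks $$ (b', b)"
    using block_start_facts[OF b'] block_start_facts[OF b] idx_eq_iff[OF b' _ b, of 0 0] bsize_pos b b'
    by (auto simp: head_mat_index)
qed auto

lemma head_mat_zero: "head_mat (0\<^sub>m ndim ndim) = 0\<^sub>m nblocks nblocks"
  by (rule eq_matI) (use block_start_facts in \<open>auto simp: head_mat_index\<close>)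

lemma head_mat_pow: "commutes_J X \<Longrightarrow> head_mat (X ^\<^sub>m t) = head_mat X ^\<^sub>m t"
proof (induction t)
  case 0
  then have "dim_row X = ndim" using commutes_J_carrier by auto
  then show ?case by (simp add: head_mat_one)
next
  case (Suc t)
  then show ?case using head_mat_mult[OF commutes_J_pow Suc.prems] by simp
qed

definition size_preserving :: "complex mat \<Rightarrow> bool" where
  "size_preserving U \<longleftrightarrow> U \<in> carrier_mat nblocks nblocks \<and>
     (\<forall>b'<nblocks. \<forall>b<nblocks. U $$ (b', b) \<noteq> 0 \<longrightarrow> bsize b' = bsize b)"

definition lift_mat :: "complex mat \<Rightarrow> complex mat" where
  "lift_mat U = mat ndim ndim (\<lambda>(x, y). if pos x = pos y then U $$ (blk x, blk y) else 0)"

lemma lift_mat_carrier [simp]: "lift_mat U \<in> carrier_mat ndim ndim"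
  and lift_mat_dims [simp]: "dim_row (lift_mat U) = ndim" "dim_col (lift_mat U) = ndim"
  unfolding lift_mat_def by auto

lemma lift_mat_index:
  "x < ndim \<Longrightarrow> y < ndim \<Longrightarrow> lift_mat U $$ (x, y) = (if pos x = pos y then U $$ (blk x, blk y) else 0)"
  unfolding lift_mat_def by auto

lemma lift_mat_mult:
  assumes U: "size_preserving U" and V: "V \<in> carrier_mat nblocks nblocks"
  shows "lift_mat U * lift_mat V = lift_mat (U * V)"
proof (rule eq_matI)
  fix x y assume "x < dim_row (lift_mat (U * V))" "y < dim_col (lift_mat (U * V))"
  then have x: "x < ndim" and y: "y < ndim" by auto
  from index_decomposition[OF x] have bx: "blk x < nblocks" "pos x < bsize (blk x)" by auto
  from index_decomposition[OF y] have by': "blk y < nblocks" by auto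
  have Uc: "U \<in> carrier_mat nblocks nblocks"
    and Usize: "\<And>c. c < nblocks \<Longrightarrow> U $$ (blk x, c) \<noteq> 0 \<Longrightarrow> bsize (blk x) = bsize c"
    using U bx unfolding size_preserving_def by auto
  have "(lift_mat U * lift_mat V) $$ (x, y) =
      (\<Sum>c<nblocks. \<Sum>q<bsize c. lift_mat U $$ (x, idx c q) * lift_mat V $$ (idx c q, y))"
    by (rule mult_index_blocks[OF lift_mat_carrier lift_mat_carrier x y])
  also have "\<dots> = (\<Sum>c<nblocks. \<Sum>q<bsize c.
      if q = pos x then (if pos x = pos y then U $$ (blk x, c) * V $$ (c, blk y) else 0) else 0)"
    using blk_pos_idx by (intro sum.cong refl) (auto simp: lift_mat_index x y)
  also have "\<dots> = (\<Sum>c<nblocks. if pos x = pos y then U $$ (blk x, c) * V $$ (c, blk y) else 0)"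
    using Usize bx by (intro sum.cong refl) fastforce
  also have "\<dots> = lift_mat (U * V) $$ (x, y)"
    using x y bx by' Uc V by (simp add: lift_mat_index scalar_prod_def lessThan_atLeast0)
  finally show "(lift_mat U * lift_mat V) $$ (x, y) = lift_mat (U * V) $$ (x, y)" .
qed auto

lemma lift_mat_one: "lift_mat (1\<^sub>m nblocks) = 1\<^sub>m ndim"
proof (rule eq_matI)
  fix x y assume "x < dim_row (1\<^sub>m ndim :: complex mat)" "y < dim_col (1\<^sub>m ndim :: complex mat)"
  then have x: "x < ndim" and y: "y < ndim" by auto
  show "lift_mat (1\<^sub>m nblocks) $$ (x, y) = 1\<^sub>m ndim $$ (x, y)"
    using index_decomposition[OF x] index_decomposition[OF y] index_eq_iff[OF x y] x y
    by (auto simp: lift_mat_index)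
qed auto

lemma lift_mat_commutes_J:
  assumes U: "size_preserving U"
  shows "commutes_J (lift_mat U)"
proof -
  have "lift_mat U * J = J * lift_mat U"
  proof (rule eq_matI)
    fix x y assume "x < dim_row (J * lift_mat U)" "y < dim_col (J * lift_mat U)"
    then have x: "x < ndim" and y: "y < ndim" by auto
    from index_decomposition[OF x] have bx: "blk x < nblocks" by auto
    from index_decomposition[OF y] have by': "blk y < nblocks" "pos y < bsize (blk y)" by auto
    have left: "(lift_mat U * J) $$ (x, y) =
        (if 0 < pos y \<and> pos x = pos y - 1 then U $$ (blk x, blk y) else 0)"
      unfolding mult_J_index[OF lift_mat_carrier x y] using pred_index[OF y] by (auto simp: x y lift_mat_index)
    have right: "(J * lift_mat U) $$ (x, y) =
        (if Suc (pos x) < bsize (blk x) \<and> Suc (pos x) = pos y then U $$ (blk x, blk y) else 0)"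
      unfolding J_mult_index[OF lift_mat_carrier x y] using succ_index[OF x] by (auto simp: x y lift_mat_index)
    show "(lift_mat U * J) $$ (x, y) = (J * lift_mat U) $$ (x, y)"
    proof (cases "U $$ (blk x, blk y) = 0")
      case False
      with U bx by' have "bsize (blk x) = bsize (blk y)" unfolding size_preserving_def by auto
      then show ?thesis unfolding left right using by'(2) by auto
    qed (simp add: left right)
  qed auto
  then show ?thesis unfolding commutes_J_def by simp
qed

lemma head_mat_lift_mat:
  assumes U: "size_preserving U"
  shows "head_mat (lift_mat U) = U"
proof (rule eq_matI)
  fix b' b assume "b' < dim_row U" "b < dim_col U"
  then have b': "b' < nblocks" and b: "b < nblocks" using U unfolding size_preserving_def by auto
  show "head_mat (lift_mat U) $$ (b', b) = U $$ (b', b)"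
    using block_start_facts[OF b'] block_start_facts[OF b] U b b'
    by (auto simp: head_mat_index lift_mat_index size_preserving_def)
qed (use U in \<open>auto simp: size_preserving_def\<close>)

end

section \<open>Jordan form of a nilpotent matrix\<close>

lemma eigenvalue_nilpotent:
  fixes M :: "'a :: field mat"
  assumes M: "M \<in> carrier_mat n n" and nil: "nilpotent_mat M" and ev: "eigenvalue M a"
  shows "a = 0"
proof -
  obtain k where Mk: "M ^\<^sub>m k = 0\<^sub>m n n" using nil M unfolding nilpotent_mat_def by auto
  obtain v where v: "eigenvector M v a" using ev unfolding eigenvalue_def by auto
  then have vc: "v \<in> carrier_vec n" and v0: "v \<noteq> 0\<^sub>v n" using M unfolding eigenvector_def by auto
  then obtain i where i: "i < n" and vi: "v $ i \<noteq> 0" by (metis eq_vecI carrier_vecD index_zero_vec)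
  have "a ^ k \<cdot>\<^sub>v v = 0\<^sub>m n n *\<^sub>v v" using eigenvector_pow[OF M v, of k] unfolding Mk by (rule sym)
  also have "\<dots> = 0\<^sub>v n" by (rule eq_vecI) (use vc in \<open>auto simp: scalar_prod_def\<close>)
  finally have "a ^ k \<cdot>\<^sub>v v = 0\<^sub>v n" .
  then have "a ^ k * v $ i = 0" using i vc by (metis index_smult_vec(1) index_zero_vec(1) carrier_vecD)
  with vi show "a = 0" by simp
qed

lemma nilpotent_similar_jordan:
  fixes M :: "complex mat"
  assumes M: "M \<in> carrier_mat n n" and nil: "nilpotent_mat M"
  obtains ms where "nilpotent_jordan ms" "sum_list ms = n" "similar_mat M (nil_jordan_mat ms)"
proof -
  obtain as where "char_poly M = (\<Prod>a\<leftarrow>as. [:- a, 1:])" using char_poly_factorized[OF M] by auto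
  from jordan_nf_exists[OF M this] obtain bl where jnf: "jordan_nf M bl" by auto
  then have sizes: "0 \<notin> fst ` set bl" and sim: "similar_mat M (jordan_matrix bl)"
    unfolding jordan_nf_def by auto
  have eigenvalues: "a = 0" if "(m, a) \<in> set bl" for m a
  proof -
    have "m \<noteq> 0" using sizes that by force
    with that have "poly (char_poly M) a = 0"
      unfolding jordan_nf_char_poly[OF jnf] by (force simp: poly_prod_list prod_list_zero_iff)
    then show "a = 0" using eigenvalue_nilpotent[OF M nil] eigenvalue_root_char_poly[OF M] by blast
  qed
  define ms where "ms = map fst bl"
  have "map (\<lambda>m. (m, 0)) ms = bl"
    unfolding ms_def map_map by (rule map_idI) (use eigenvalues in fastforce)
  then have J: "nil_jordan_mat ms = jordan_matrix bl" unfolding nil_jordan_mat_def by simp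
  have "nilpotent_jordan ms"
    by unfold_locales (use sizes in \<open>force simp: ms_def\<close>)
  moreover have "sum_list ms = n"
    using sim M unfolding similar_mat_def ms_def by (metis carrier_matD(1) jordan_matrix_dim(1) similar_mat_witD2(5))
  ultimately show ?thesis using sim unfolding J[symmetric] by (rule that)
qed

definition strictly_upper :: "'a :: zero mat \<Rightarrow> bool" where
  "strictly_upper A \<longleftrightarrow> (\<forall>i<dim_row A. \<forall>j<dim_col A. A $$ (i, j) \<noteq> 0 \<longrightarrow> i < j)"

lemma (in nilpotent_jordan) J_strictly_upper: "strictly_upper J"
  unfolding strictly_upper_def using J_index_succ by auto

lemma nilpotent_similar_strictly_upper:
  fixes M :: "complex mat"
  assumes M: "M \<in> carrier_mat m m" and nil: "nilpotent_mat M"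
  shows "\<exists>P Q. P \<in> carrier_mat m m \<and> Q \<in> carrier_mat m m \<and> P * Q = 1\<^sub>m m \<and> Q * P = 1\<^sub>m m \<and>
    strictly_upper (Q * M * P)"
proof -
  obtain ms where jordan: "nilpotent_jordan ms" and m: "sum_list ms = m"
    and "similar_mat M (nil_jordan_mat ms)"
    by (rule nilpotent_similar_jordan[OF M nil])
  then obtain P Q where wit: "similar_mat_wit M (nil_jordan_mat ms) P Q" unfolding similar_mat_def by auto
  note w = similar_mat_witD2[OF M wit]
  have "Q * M * P = nil_jordan_mat ms"
    using similar_mat_witD2(3)[OF w(5) similar_mat_wit_sym[OF wit]] by simp
  then show ?thesis using nilpotent_jordan.J_strictly_upper[OF jordan] w by metis
qed

section \<open>Simultaneous triangularization within classes\<close>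

lemma upt_split_at: "i < m \<Longrightarrow> [0..<m] = [0..<i] @ i # [Suc i..<m]"
  using upt_add_eq_append[of 0 i "m - i"] upt_conv_Cons[of i m] by simp

locale index_classes =
  fixes k :: nat and c :: "nat \<Rightarrow> nat"
begin

definition members :: "nat \<Rightarrow> nat list" where
  "members s = filter (\<lambda>i. c i = s) [0..<k]"

abbreviation "class_size s \<equiv> length (members s)"

definition class_pos :: "nat \<Rightarrow> nat" where
  "class_pos i = length (filter (\<lambda>j. c j = c i) [0..<i])"

lemma class_pos_bounds:
  assumes i: "i < k"
  shows "class_pos i < class_size (c i) \<and> members (c i) ! class_pos i = i"
proof -
  have "members (c i) = filter (\<lambda>j. c j = c i) [0..<i] @ i # filter (\<lambda>j. c j = c i) [Suc i..<k]"
    unfolding members_def using upt_split_at[OF i] by simp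
  then show ?thesis unfolding class_pos_def by (simp add: nth_append)
qed

lemma distinct_members: "distinct (members s)"
  unfolding members_def by simp

lemma set_members: "set (members s) = {i \<in> {..<k}. c i = s}"
  unfolding members_def by auto

lemma nth_members:
  assumes t: "t < class_size s"
  shows "members s ! t < k \<and> c (members s ! t) = s \<and> class_pos (members s ! t) = t"
proof -
  have "members s ! t \<in> set (members s)" using t by simp
  then have lt: "members s ! t < k" and cs: "c (members s ! t) = s" unfolding set_members by auto
  from class_pos_bounds[OF lt] cs
  have "class_pos (members s ! t) < class_size s" "members s ! class_pos (members s ! t) = members s ! t" by auto
  with distinct_members[of s] t have "class_pos (members s ! t) = t" by (simp add: nth_eq_iff_index_eq)
  with lt cs show ?thesis by auto
qed

lemma class_pos_mono:
  assumes "i < j" "j < k" "c i = c j"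
  shows "class_pos i < class_pos j"
proof -
  have "[0..<j] = [0..<i] @ i # [Suc i..<j]" using upt_split_at[of i j] assms by simp
  then show ?thesis unfolding class_pos_def using assms by simp
qed

lemma class_pos_inj:
  assumes i: "i < k" and j: "j < k" and "c i = c j" "class_pos i = class_pos j"
  shows "i = j"
  using class_pos_bounds[OF i] class_pos_bounds[OF j] assms by metis

lemma sum_class: "(\<Sum>l<k. if c l = s then f l else 0) = (\<Sum>t<class_size s. f (members s ! t))"
proof -
  have "(\<Sum>l<k. if c l = s then f l else 0) = (\<Sum>l\<in>{l \<in> {..<k}. c l = s}. f l)"
    by (rule sum.inter_filter[symmetric]) simp
  also have "\<dots> = sum_list (map f (members s))"
    unfolding set_members[symmetric] using distinct_members by (simp add: sum.distinct_set_conv_list)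
  also have "\<dots> = (\<Sum>t<class_size s. f (members s ! t))"
    by (simp add: sum_list_sum_nth lessThan_atLeast0)
  finally show ?thesis .
qed

definition assemble :: "(nat \<Rightarrow> complex mat) \<Rightarrow> complex mat" where
  "assemble F = mat k k (\<lambda>(i, j). if c i = c j then F (c i) $$ (class_pos i, class_pos j) else 0)"

lemma assemble_carrier [simp]: "assemble F \<in> carrier_mat k k"
  and assemble_dims [simp]: "dim_row (assemble F) = k" "dim_col (assemble F) = k"
  unfolding assemble_def by auto

lemma assemble_index:
  "i < k \<Longrightarrow> j < k \<Longrightarrow>
     assemble F $$ (i, j) = (if c i = c j then F (c i) $$ (class_pos i, class_pos j) else 0)"
  unfolding assemble_def by auto

lemma assemble_index_members:
  "t < class_size s \<Longrightarrow> t' < class_size s \<Longrightarrow> assemble F $$ (members s ! t, members s ! t') = F s $$ (t, t')"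
  using nth_members[of t s] nth_members[of t' s] assemble_index by auto

lemma assemble_mult:
  assumes F: "\<And>s. F s \<in> carrier_mat (class_size s) (class_size s)"
    and G: "\<And>s. G s \<in> carrier_mat (class_size s) (class_size s)"
  shows "assemble F * assemble G = assemble (\<lambda>s. F s * G s)"
proof (rule eq_matI)
  fix i j assume "i < dim_row (assemble (\<lambda>s. F s * G s))" "j < dim_col (assemble (\<lambda>s. F s * G s))"
  then have i: "i < k" and j: "j < k" by auto
  have "(assemble F * assemble G) $$ (i, j) = (\<Sum>l<k. assemble F $$ (i, l) * assemble G $$ (l, j))"
    using i j by (simp add: scalar_prod_def lessThan_atLeast0)
  also have "\<dots> = (\<Sum>l<k. if c l = c i then
      (if c i = c j then F (c i) $$ (class_pos i, class_pos l) * G (c i) $$ (class_pos l, class_pos j) else 0) else 0)"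
    by (rule sum.cong) (auto simp: assemble_index i j)
  also have "\<dots> = (\<Sum>t<class_size (c i).
      if c i = c j then F (c i) $$ (class_pos i, t) * G (c i) $$ (t, class_pos j) else 0)"
    unfolding sum_class by (rule sum.cong) (auto simp: nth_members)
  also have "\<dots> = assemble (\<lambda>s. F s * G s) $$ (i, j)"
  proof (cases "c i = c j")
    case True
    have "class_pos i < class_size (c i)" "class_pos j < class_size (c i)"
      using class_pos_bounds[OF i] class_pos_bounds[OF j] True by auto
    then show ?thesis using True F[of "c i"] G[of "c i"] unfolding assemble_index[OF i j]
      by (simp add: scalar_prod_def lessThan_atLeast0)
  qed (simp add: assemble_index i j)
  finally show "(assemble F * assemble G) $$ (i, j) = assemble (\<lambda>s. F s * G s) $$ (i, j)" .
qed auto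

lemma assemble_one: "assemble (\<lambda>s. 1\<^sub>m (class_size s)) = 1\<^sub>m k"
proof (rule eq_matI)
  fix i j assume "i < dim_row (1\<^sub>m k :: complex mat)" "j < dim_col (1\<^sub>m k :: complex mat)"
  then have i: "i < k" and j: "j < k" by auto
  show "assemble (\<lambda>s. 1\<^sub>m (class_size s)) $$ (i, j) = 1\<^sub>m k $$ (i, j)"
    unfolding assemble_index[OF i j] using class_pos_bounds[OF i] class_pos_bounds[OF j] class_pos_inj[OF i j] i j
    by auto
qed auto

lemma assemble_pow:
  assumes F: "\<And>s. F s \<in> carrier_mat (class_size s) (class_size s)"
  shows "assemble F ^\<^sub>m t = assemble (\<lambda>s. F s ^\<^sub>m t)"
proof (induction t)
  case 0
  have "dim_row (F s) = class_size s" for s using F[of s] by auto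
  then show ?case using assemble_one by simp
next
  case (Suc t)
  have "assemble F ^\<^sub>m Suc t = assemble (\<lambda>s. F s ^\<^sub>m t) * assemble F" using Suc by simp
  also have "\<dots> = assemble (\<lambda>s. F s ^\<^sub>m t * F s)" by (rule assemble_mult) (use F in auto)
  finally show ?case by simp
qed

definition class_block :: "complex mat \<Rightarrow> nat \<Rightarrow> complex mat" where
  "class_block X s = mat (class_size s) (class_size s) (\<lambda>(t, t'). X $$ (members s ! t, members s ! t'))"

lemma class_block_carrier [simp]: "class_block X s \<in> carrier_mat (class_size s) (class_size s)"
  and class_block_dims [simp]: "dim_row (class_block X s) = class_size s" "dim_col (class_block X s) = class_size s"
  unfolding class_block_def by auto

lemma assemble_class_block:
  assumes X: "X \<in> carrier_mat k k"
    and classes: "\<And>i j. i < k \<Longrightarrow> j < k \<Longrightarrow> X $$ (i, j) \<noteq> 0 \<Longrightarrow> c i = c j"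
  shows "assemble (class_block X) = X"
proof (rule eq_matI)
  fix i j assume "i < dim_row X" "j < dim_col X"
  then have i: "i < k" and j: "j < k" using X by auto
  show "assemble (class_block X) $$ (i, j) = X $$ (i, j)"
    unfolding assemble_index[OF i j] using class_pos_bounds[OF i] class_pos_bounds[OF j] classes[OF i j]
    by (auto simp: class_block_def)
qed (use X in auto)

lemma assemble_index_nonzero: "i < k \<Longrightarrow> j < k \<Longrightarrow> assemble F $$ (i, j) \<noteq> 0 \<Longrightarrow> c i = c j"
  by (simp add: assemble_index split: if_splits)

lemma nilpotent_class_block:
  assumes X: "X \<in> carrier_mat k k"
    and classes: "\<And>i j. i < k \<Longrightarrow> j < k \<Longrightarrow> X $$ (i, j) \<noteq> 0 \<Longrightarrow> c i = c j"
    and nil: "nilpotent_mat X"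
  shows "nilpotent_mat (class_block X s)"
proof -
  obtain N where XN: "X ^\<^sub>m N = 0\<^sub>m k k" using nil X unfolding nilpotent_mat_def by auto
  have "assemble (\<lambda>s. class_block X s ^\<^sub>m N) = 0\<^sub>m k k"
    using assemble_pow[of "class_block X" N] assemble_class_block[OF X classes] XN by simp
  have "class_block X s ^\<^sub>m N = 0\<^sub>m (class_size s) (class_size s)"
  proof (rule eq_matI)
    fix t t' assume "t < dim_row (0\<^sub>m (class_size s) (class_size s) :: complex mat)"
      "t' < dim_col (0\<^sub>m (class_size s) (class_size s) :: complex mat)"
    then have t: "t < class_size s" "t' < class_size s" by auto
    have "assemble (\<lambda>s. class_block X s ^\<^sub>m N) $$ (members s ! t, members s ! t') = 0"
      using \<open>assemble (\<lambda>s. class_block X s ^\<^sub>m N) = 0\<^sub>m k k\<close> nth_members[OF t(1)] nth_members[OF t(2)] by simp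
    then show "(class_block X s ^\<^sub>m N) $$ (t, t') = 0\<^sub>m (class_size s) (class_size s) $$ (t, t')"
      unfolding assemble_index_members[OF t] using t by simp
  qed auto
  then show ?thesis unfolding nilpotent_mat_def by auto
qed

lemma strictly_upper_assemble:
  assumes F: "\<And>s. F s \<in> carrier_mat (class_size s) (class_size s)" and upper: "\<And>s. strictly_upper (F s)"
  shows "strictly_upper (assemble F)"
  unfolding strictly_upper_def assemble_dims
proof (intro allI impI)
  fix i j assume i: "i < k" and j: "j < k" and ne: "assemble F $$ (i, j) \<noteq> 0"
  then have cij: "c i = c j" and ne': "F (c i) $$ (class_pos i, class_pos j) \<noteq> 0"
    unfolding assemble_index[OF i j] by (auto split: if_splits)
  have "class_pos i < class_size (c i)" "class_pos j < class_size (c i)"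
    using class_pos_bounds[OF i] class_pos_bounds[OF j] cij by auto
  with upper[of "c i"] ne' F[of "c i"] have "class_pos i < class_pos j"
    unfolding strictly_upper_def by auto
  then show "i < j" using class_pos_mono[of j i] cij i by (metis less_asym linorder_neqE_nat)
qed

end

lemma strictly_upper_similar_within_classes:
  fixes D :: "complex mat" and c :: "nat \<Rightarrow> nat"
  assumes D: "D \<in> carrier_mat k k" and nil: "nilpotent_mat D"
    and classes: "\<And>i j. i < k \<Longrightarrow> j < k \<Longrightarrow> D $$ (i, j) \<noteq> 0 \<Longrightarrow> c i = c j"
  obtains U U' where "U \<in> carrier_mat k k" "U' \<in> carrier_mat k k" "U * U' = 1\<^sub>m k" "U' * U = 1\<^sub>m k"
    "\<And>i j. i < k \<Longrightarrow> j < k \<Longrightarrow> U $$ (i, j) \<noteq> 0 \<Longrightarrow> c i = c j"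
    "\<And>i j. i < k \<Longrightarrow> j < k \<Longrightarrow> U' $$ (i, j) \<noteq> 0 \<Longrightarrow> c i = c j"
    "strictly_upper (U' * D * U)"
proof -
  interpret index_classes k c .
  let ?R = "class_block D"
  have "\<forall>s. \<exists>PQ. fst PQ \<in> carrier_mat (class_size s) (class_size s) \<and>
      snd PQ \<in> carrier_mat (class_size s) (class_size s) \<and>
      fst PQ * snd PQ = 1\<^sub>m (class_size s) \<and> snd PQ * fst PQ = 1\<^sub>m (class_size s) \<and>
      strictly_upper (snd PQ * ?R s * fst PQ)"
    using nilpotent_similar_strictly_upper[OF class_block_carrier nilpotent_class_block[OF D classes nil]]
    by simp
  from choice[OF this] obtain PQ where PQ: "\<forall>s. fst (PQ s) \<in> carrier_mat (class_size s) (class_size s) \<and>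
      snd (PQ s) \<in> carrier_mat (class_size s) (class_size s) \<and>
      fst (PQ s) * snd (PQ s) = 1\<^sub>m (class_size s) \<and> snd (PQ s) * fst (PQ s) = 1\<^sub>m (class_size s) \<and>
      strictly_upper (snd (PQ s) * ?R s * fst (PQ s))"
    by blast
  define P where "P s = fst (PQ s)" for s
  define Q where "Q s = snd (PQ s)" for s
  have P: "P s \<in> carrier_mat (class_size s) (class_size s)" and Q: "Q s \<in> carrier_mat (class_size s) (class_size s)"
    and PQ1: "P s * Q s = 1\<^sub>m (class_size s)" and QP1: "Q s * P s = 1\<^sub>m (class_size s)"
    and upper: "strictly_upper (Q s * ?R s * P s)" for s
    using spec[OF PQ, of s] unfolding P_def Q_def by auto
  have QRP: "Q s * ?R s * P s \<in> carrier_mat (class_size s) (class_size s)" for s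
    using P Q by (meson class_block_carrier mult_carrier_mat)
  have "assemble Q * D * assemble P = assemble Q * assemble ?R * assemble P"
    using assemble_class_block[OF D classes] by simp
  also have "\<dots> = assemble (\<lambda>s. Q s * ?R s) * assemble P"
    by (simp add: assemble_mult[OF Q class_block_carrier])
  also have "\<dots> = assemble (\<lambda>s. Q s * ?R s * P s)"
    by (rule assemble_mult[OF mult_carrier_mat[OF Q class_block_carrier] P])
  finally have "strictly_upper (assemble Q * D * assemble P)"
    using strictly_upper_assemble[OF QRP upper] by simp
  then show ?thesis
  proof (rule that[rotated -1])
    show "assemble P * assemble Q = 1\<^sub>m k" unfolding assemble_mult[OF P Q] PQ1 assemble_one ..
    show "assemble Q * assemble P = 1\<^sub>m k" unfolding assemble_mult[OF Q P] QP1 assemble_one ..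
  qed (simp_all add: assemble_index_nonzero)
qed

section \<open>Nilpotency from an increasing order\<close>

lemma pow_eq_0_if_weight_increasing:
  fixes M :: "'a :: comm_ring_1 mat"
  assumes M: "M \<in> carrier_mat m m"
    and inc: "\<And>i j. i < m \<Longrightarrow> j < m \<Longrightarrow> M $$ (i, j) \<noteq> 0 \<Longrightarrow> f i < f j"
    and bound: "\<And>i. i < m \<Longrightarrow> f i < R"
  shows "M ^\<^sub>m R = 0\<^sub>m m m"
proof -
  have pow: "f i + t \<le> f j" if "i < m" "j < m" "(M ^\<^sub>m t) $$ (i, j) \<noteq> 0" for t i j
    using that
  proof (induction t arbitrary: j)
    case 0
    then show ?case using M by (auto split: if_splits)
  next
    case (Suc t)
    have "(M ^\<^sub>m Suc t) $$ (i, j) = (\<Sum>l\<in>{0..<m}. (M ^\<^sub>m t) $$ (i, l) * M $$ (l, j))"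
      using M Suc.prems by (simp add: scalar_prod_def)
    with Suc.prems(3) obtain l where l: "l < m" and nz: "(M ^\<^sub>m t) $$ (i, l) * M $$ (l, j) \<noteq> 0"
      by (metis (no_types, lifting) atLeastLessThan_iff sum.neutral)
    from nz have "(M ^\<^sub>m t) $$ (i, l) \<noteq> 0" "M $$ (l, j) \<noteq> 0" by auto
    with Suc.IH[OF Suc.prems(1) l] inc[OF l Suc.prems(2)] show ?case by simp
  qed
  show ?thesis
  proof (rule eq_matI)
    fix i j assume "i < dim_row (0\<^sub>m m m :: 'a mat)" "j < dim_col (0\<^sub>m m m :: 'a mat)"
    then have i: "i < m" and j: "j < m" by auto
    show "(M ^\<^sub>m R) $$ (i, j) = 0\<^sub>m m m $$ (i, j)"
      using pow[OF i j, of R] bound[OF j] i j by fastforce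
  qed (use M in auto)
qed

lemma nilpotent_if_order_increasing:
  fixes M :: "'a :: comm_ring_1 mat" and key :: "nat \<Rightarrow> 'b :: order"
  assumes M: "M \<in> carrier_mat m m"
    and inc: "\<And>i j. i < m \<Longrightarrow> j < m \<Longrightarrow> M $$ (i, j) \<noteq> 0 \<Longrightarrow> key i < key j"
  shows "nilpotent_mat M"
proof -
  define below where "below i = {l \<in> {..<m}. key l < key i}" for i
  have "card (below i) < card (below j)" if "i < m" "key i < key j" for i j
  proof -
    have "below i \<subseteq> below j" using that(2) unfolding below_def by (auto intro: less_trans)
    moreover have "i \<in> below j - below i" using that unfolding below_def by auto
    ultimately have "below i \<subset> below j" by blast
    then show ?thesis by (rule psubset_card_mono[rotated]) (simp add: below_def)
  qed
  moreover have "card (below i) < m" if "i < m" for i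
  proof -
    have "card (below i) \<le> card ({..<m} - {i})" unfolding below_def by (intro card_mono) auto
    then show ?thesis using that by simp
  qed
  ultimately have "M ^\<^sub>m m = 0\<^sub>m m m"
    using inc by (intro pow_eq_0_if_weight_increasing[OF M, of "\<lambda>i. card (below i)"]) auto
  then show ?thesis using M unfolding nilpotent_mat_def by auto
qed

section \<open>The partner matrix\<close>

context nilpotent_jordan
begin

lemma head_mat_triangularizable:
  assumes X: "commutes_J X" and nil: "nilpotent_mat X"
  obtains S S' where "commutes_J S" "commutes_J S'" "S * S' = 1\<^sub>m ndim" "S' * S = 1\<^sub>m ndim"
    "strictly_upper (head_mat (S' * X * S))"
proof -
  have Xc: "X \<in> carrier_mat ndim ndim" using X by (rule commutes_J_carrier)
  obtain N where "X ^\<^sub>m N = 0\<^sub>m ndim ndim" using nil Xc unfolding nilpotent_mat_def by auto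
  then have "head_mat X ^\<^sub>m N = 0\<^sub>m nblocks nblocks" by (simp add: head_mat_pow[OF X, symmetric] head_mat_zero)
  then have nil_head: "nilpotent_mat (head_mat X)" unfolding nilpotent_mat_def by auto
  have classes: "bsize b' = bsize b" if "b' < nblocks" "b < nblocks" "head_mat X $$ (b', b) \<noteq> 0" for b' b
    using that by (simp add: head_mat_index split: if_splits)
  obtain U U' where U: "U \<in> carrier_mat nblocks nblocks" and U': "U' \<in> carrier_mat nblocks nblocks"
    and UU': "U * U' = 1\<^sub>m nblocks" and U'U: "U' * U = 1\<^sub>m nblocks"
    and U_sizes: "\<And>i j. i < nblocks \<Longrightarrow> j < nblocks \<Longrightarrow> U $$ (i, j) \<noteq> 0 \<Longrightarrow> bsize i = bsize j"
    and U'_sizes: "\<And>i j. i < nblocks \<Longrightarrow> j < nblocks \<Longrightarrow> U' $$ (i, j) \<noteq> 0 \<Longrightarrow> bsize i = bsize j"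
    and upper: "strictly_upper (U' * head_mat X * U)"
    using strictly_upper_similar_within_classes[where c = "\<lambda>b. bsize b" and k = nblocks and D = "head_mat X",
        OF head_mat_carrier nil_head classes] by blast
  have sp: "size_preserving U" "size_preserving U'"
    unfolding size_preserving_def using U U' U_sizes U'_sizes by auto
  note lift = lift_mat_commutes_J[OF sp(1)] lift_mat_commutes_J[OF sp(2)]
  show ?thesis
  proof (rule that[OF lift])
    show "lift_mat U * lift_mat U' = 1\<^sub>m ndim" "lift_mat U' * lift_mat U = 1\<^sub>m ndim"
      by (simp_all add: lift_mat_mult sp U U' UU' U'U lift_mat_one)
    have "head_mat (lift_mat U' * X * lift_mat U) = U' * head_mat X * U"
      by (simp add: head_mat_mult commutes_J_mult lift X head_mat_lift_mat sp)
    then show "strictly_upper (head_mat (lift_mat U' * X * lift_mat U))" using upper by simp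
  qed
qed

definition block_key :: "nat \<Rightarrow> nat \<times> nat" where
  "block_key b = (bsize b, b)"

definition block_rank :: "nat \<Rightarrow> nat" where
  "block_rank b = card {b' \<in> {..<nblocks}. block_key b' < block_key b}"

lemma block_rank_less: "b < nblocks \<Longrightarrow> block_rank b < nblocks"
proof -
  assume b: "b < nblocks"
  have "block_rank b \<le> card ({..<nblocks} - {b})" unfolding block_rank_def by (intro card_mono) auto
  then show ?thesis using b by simp
qed

lemma block_rank_mono:
  assumes "b < nblocks" "b' < nblocks" "block_key b < block_key b'"
  shows "block_rank b < block_rank b'"
proof -
  have "{c \<in> {..<nblocks}. block_key c < block_key b} \<subset> {c \<in> {..<nblocks}. block_key c < block_key b'}"
    using assms by (auto intro: less_trans)
  then show ?thesis unfolding block_rank_def by (rule psubset_card_mono[rotated]) simp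
qed

lemma block_key_inj: "block_key b = block_key b' \<Longrightarrow> b = b'"
  by (simp add: block_key_def)

lemma block_rank_less_iff:
  assumes b: "b < nblocks" and b': "b' < nblocks"
  shows "block_rank b < block_rank b' \<longleftrightarrow> block_key b < block_key b'"
proof
  assume less: "block_rank b < block_rank b'"
  show "block_key b < block_key b'"
  proof (rule ccontr)
    assume "\<not> block_key b < block_key b'"
    then have "block_key b' < block_key b \<or> block_key b' = block_key b" by auto
    then show False using block_rank_mono[OF b' b] block_key_inj less by auto
  qed
qed (rule block_rank_mono[OF b b'])

lemma block_rank_inj:
  assumes b: "b < nblocks" and b': "b' < nblocks" and eq: "block_rank b = block_rank b'"
  shows "b = b'"
proof (rule ccontr)
  assume "b \<noteq> b'"
  then have "block_key b \<noteq> block_key b'" using block_key_inj by blast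
  then have "block_key b < block_key b' \<or> block_key b' < block_key b" by (simp add: neq_iff)
  then show False using block_rank_mono[OF b b'] block_rank_mono[OF b' b] eq by auto
qed

lemma block_rank_surj:
  assumes t: "t < nblocks"
  obtains b where "b < nblocks" "block_rank b = t"
proof -
  have "inj_on block_rank {..<nblocks}" using block_rank_inj by (auto simp: inj_on_def)
  then have "card (block_rank ` {..<nblocks}) = nblocks" by (simp add: card_image)
  moreover have "block_rank ` {..<nblocks} \<subseteq> {..<nblocks}" using block_rank_less by auto
  ultimately have "block_rank ` {..<nblocks} = {..<nblocks}" by (simp add: card_subset_eq)
  with t that show ?thesis by (metis imageE lessThan_iff)
qed

lemma block_rank_Suc:
  assumes "b' < nblocks" "b < nblocks" "Suc (block_rank b') = block_rank b"
  shows "bsize b' \<le> bsize b \<and> (bsize b' = bsize b \<longrightarrow> b' < b)"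
  using block_rank_less_iff[OF assms(1,2)] assms(3) unfolding block_key_def by auto

definition dist_to_end :: "nat \<Rightarrow> nat" where
  "dist_to_end x = bsize (blk x) - pos x"

definition shift_mat :: "complex mat" where
  "shift_mat = mat ndim ndim (\<lambda>(x, y).
     if Suc (block_rank (blk x)) = block_rank (blk y) \<and> dist_to_end x = dist_to_end y then 1 else 0)"

lemma shift_mat_carrier [simp]: "shift_mat \<in> carrier_mat ndim ndim"
  and shift_mat_dims [simp]: "dim_row shift_mat = ndim" "dim_col shift_mat = ndim"
  unfolding shift_mat_def by auto

lemma shift_mat_index:
  "x < ndim \<Longrightarrow> y < ndim \<Longrightarrow> shift_mat $$ (x, y) =
     (if Suc (block_rank (blk x)) = block_rank (blk y) \<and> dist_to_end x = dist_to_end y then 1 else 0)"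
  unfolding shift_mat_def by auto

lemma shift_mat_commutes_J: "commutes_J shift_mat"
proof -
  have "shift_mat * J = J * shift_mat"
  proof (rule eq_matI)
    fix x y assume "x < dim_row (J * shift_mat)" "y < dim_col (J * shift_mat)"
    then have x: "x < ndim" and y: "y < ndim" by auto
    from index_decomposition[OF x] have bx: "blk x < nblocks" "pos x < bsize (blk x)" by auto
    from index_decomposition[OF y] have by': "blk y < nblocks" "pos y < bsize (blk y)" by auto
    let ?adj = "Suc (block_rank (blk x)) = block_rank (blk y)"
    have left: "(shift_mat * J) $$ (x, y) = (if 0 < pos y \<and> ?adj \<and> dist_to_end x = Suc (dist_to_end y) then 1 else 0)"
      unfolding mult_J_index[OF shift_mat_carrier x y] using pred_index[OF y] by'
      by (auto simp: shift_mat_index x dist_to_end_def)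
    have right: "(J * shift_mat) $$ (x, y) =
        (if Suc (pos x) < bsize (blk x) \<and> ?adj \<and> dist_to_end x - 1 = dist_to_end y then 1 else 0)"
      unfolding J_mult_index[OF shift_mat_carrier x y] using succ_index[OF x]
      by (auto simp: shift_mat_index y dist_to_end_def)
    show "(shift_mat * J) $$ (x, y) = (J * shift_mat) $$ (x, y)"
    proof (cases ?adj)
      case True
      then have "bsize (blk x) \<le> bsize (blk y)" using block_rank_Suc[OF bx(1) by'(1)] by simp
      then have "0 < pos y \<and> dist_to_end x = Suc (dist_to_end y) \<longleftrightarrow>
          Suc (pos x) < bsize (blk x) \<and> dist_to_end x - 1 = dist_to_end y"
        unfolding dist_to_end_def using bx by' by linarith
      then show ?thesis unfolding left right using True by simp
    qed (simp add: left right)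
  qed auto
  then show ?thesis unfolding commutes_J_def by simp
qed

definition weight :: "nat \<Rightarrow> nat \<times> int \<times> nat" where
  "weight x = (pos x, - int (bsize (blk x)), blk x)"

lemma weight_shift_mat:
  assumes x: "x < ndim" and y: "y < ndim" and ne: "shift_mat $$ (x, y) \<noteq> 0"
  shows "weight x < weight y"
proof -
  from index_decomposition[OF x] have bx: "blk x < nblocks" "pos x < bsize (blk x)" by auto
  from index_decomposition[OF y] have by': "blk y < nblocks" "pos y < bsize (blk y)" by auto
  from ne have adj: "Suc (block_rank (blk x)) = block_rank (blk y)" and d: "dist_to_end x = dist_to_end y"
    unfolding shift_mat_index[OF x y] by (auto split: if_splits)
  from block_rank_Suc[OF bx(1) by'(1) adj] d bx by' show ?thesis
    unfolding weight_def dist_to_end_def by auto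
qed

lemma weight_commutant:
  assumes X: "commutes_J X" and upper: "strictly_upper (head_mat X)"
    and x: "x < ndim" and y: "y < ndim" and ne: "X $$ (x, y) \<noteq> 0"
  shows "weight x < weight y"
proof -
  from index_decomposition[OF x] have bx: "blk x < nblocks" "pos x < bsize (blk x)" "idx (blk x) (pos x) = x" by auto
  from index_decomposition[OF y] have by': "blk y < nblocks" "pos y < bsize (blk y)" "idx (blk y) (pos y) = y" by auto
  have ne': "X $$ (idx (blk x) (pos x), idx (blk y) (pos y)) \<noteq> 0" using ne bx(3) by'(3) by simp
  have pos_le: "pos x \<le> pos y" by (rule commutant_pos_le[OF X by'(1,2) bx(1,2) ne'])
  have dist_le: "bsize (blk y) - pos y \<le> bsize (blk x) - pos x"
    by (rule commutant_dist_le[OF X by'(1,2) bx(1,2) ne'])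
  show ?thesis
  proof (cases "pos x = pos y \<and> bsize (blk x) = bsize (blk y)")
    case True
    have "X $$ (idx (blk x) (pos x), idx (blk y) (pos x)) = X $$ (idx (blk x) 0, idx (blk y) 0)"
      by (rule commutant_toeplitz[OF X by'(1)]) (use True by' bx in auto)
    then have "head_mat X $$ (blk x, blk y) \<noteq> 0" using ne' True by (simp add: head_mat_index bx by')
    then have "blk x < blk y" using upper bx by' unfolding strictly_upper_def by auto
    then show ?thesis using True unfolding weight_def by simp
  next
    case False
    then show ?thesis using pos_le dist_le bx by' unfolding weight_def by auto
  qed
qed

definition block_end :: "nat \<Rightarrow> nat" where
  "block_end b = idx b (bsize b - 1)"

lemma block_end_facts:
  "b < nblocks \<Longrightarrow> block_end b < ndim \<and> blk (block_end b) = b \<and> pos (block_end b) = bsize b - 1 \<and>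
     dist_to_end (block_end b) = 1"
  using blk_pos_idx[of b "bsize b - 1"] bsize_pos[of b] unfolding block_end_def dist_to_end_def by auto

lemma shift_mat_unit_block_end:
  assumes b: "b < nblocks" and b': "b' < nblocks" and adj: "Suc (block_rank b) = block_rank b'"
  shows "shift_mat *\<^sub>v unit_vec ndim (block_end b') = unit_vec ndim (block_end b)"
proof (rule eq_vecI)
  fix x assume "x < dim_vec (unit_vec ndim (block_end b))"
  then have x: "x < ndim" by simp
  from index_decomposition[OF x] have bx: "blk x < nblocks" "pos x < bsize (blk x)" by auto
  have "Suc (block_rank (blk x)) = block_rank b' \<and> dist_to_end x = 1 \<longleftrightarrow> x = block_end b"
    using block_rank_inj[OF bx(1) b] index_eq_iff[OF x] block_end_facts[OF b] adj bx
    unfolding dist_to_end_def by auto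
  then show "(shift_mat *\<^sub>v unit_vec ndim (block_end b')) $ x = unit_vec ndim (block_end b) $ x"
    using mult_mat_vec_unit_vec[OF shift_mat_carrier] block_end_facts[OF b'] block_end_facts[OF b] x
    by (simp add: shift_mat_index)
qed simp

lemma J_unit_vec:
  assumes b: "b < nblocks" and p: "Suc p < bsize b"
  shows "J *\<^sub>v unit_vec ndim (idx b (Suc p)) = unit_vec ndim (idx b p)"
proof (rule eq_vecI)
  fix x assume "x < dim_vec (unit_vec ndim (idx b p))"
  then have x: "x < ndim" by simp
  have succ: "idx b (Suc p) < ndim" "blk (idx b (Suc p)) = b" "pos (idx b (Suc p)) = Suc p"
    using blk_pos_idx[OF b p] by auto
  have "idx b p < ndim" "blk (idx b p) = b" "pos (idx b p) = p" using blk_pos_idx[OF b, of p] p by auto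
  then have "blk x = b \<and> Suc p = Suc (pos x) \<longleftrightarrow> x = idx b p" using index_eq_iff[OF x] by auto
  then show "(J *\<^sub>v unit_vec ndim (idx b (Suc p))) $ x = unit_vec ndim (idx b p) $ x"
    using mult_mat_vec_unit_vec[OF J_carrier succ(1)] x J_index[OF x succ(1)] succ by simp
qed simp

lemma block_ends_in_invariant:
  assumes top: "bt < nblocks" "block_rank bt = nblocks - 1"
    and inv: "invariant_under shift_mat W" and w: "unit_vec ndim (block_end bt) \<in> W"
    and b: "b < nblocks"
  shows "unit_vec ndim (block_end b) \<in> W"
proof -
  have reach: "unit_vec ndim (block_end b) \<in> W"
    if "t < nblocks" "b < nblocks" "block_rank b = nblocks - 1 - t" for t b
    using that
  proof (induction t arbitrary: b)
    case 0
    then show ?case using block_rank_inj[OF 0(2) top(1)] top(2) w by simp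
  next
    case (Suc t)
    have "nblocks - 1 - t < nblocks" using Suc.prems(1) by simp
    then obtain b' where b': "b' < nblocks" "block_rank b' = nblocks - 1 - t" by (rule block_rank_surj)
    have adj: "Suc (block_rank b) = block_rank b'" using Suc.prems b' by auto
    have "unit_vec ndim (block_end b') \<in> W" using Suc.IH[OF _ b'] Suc.prems(1) by simp
    then have "shift_mat *\<^sub>v unit_vec ndim (block_end b') \<in> W" using inv unfolding invariant_under_def by blast
    then show ?case unfolding shift_mat_unit_block_end[OF Suc.prems(2) b'(1) adj] .
  qed
  have rank: "block_rank b = nblocks - 1 - (nblocks - 1 - block_rank b)"
    using block_rank_less[OF b] by arith
  show ?thesis by (rule reach[OF _ b rank]) (use b in simp)
qed

lemma block_in_invariant:
  assumes inv: "invariant_under J W" and b: "b < nblocks" and e: "unit_vec ndim (block_end b) \<in> W"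
    and p: "p < bsize b"
  shows "unit_vec ndim (idx b p) \<in> W"
proof -
  have "unit_vec ndim (idx b (bsize b - 1 - d)) \<in> W" if "d < bsize b" for d
    using that
  proof (induction d)
    case 0
    then show ?case using e unfolding block_end_def by simp
  next
    case (Suc d)
    have e: "Suc (bsize b - 1 - Suc d) = bsize b - 1 - d" using Suc.prems by auto
    have "J *\<^sub>v unit_vec ndim (idx b (Suc (bsize b - 1 - Suc d))) \<in> W"
      using Suc inv e unfolding invariant_under_def by auto
    then show ?case using J_unit_vec[OF b, of "bsize b - 1 - Suc d"] e Suc.prems bsize_pos[OF b] by auto
  qed
  from this[of "bsize b - 1 - p"] show ?thesis using p by (simp add: Suc_le_eq)
qed

lemma cyclic_block_end:
  assumes top: "bt < nblocks" "block_rank bt = nblocks - 1"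
  shows "cyclic_vector_pair ndim J shift_mat (unit_vec ndim (block_end bt))"
  unfolding cyclic_vector_pair_def
proof
  assume "\<exists>W. is_subspace ndim W \<and> W \<noteq> carrier_vec ndim \<and> invariant_under J W \<and>
    invariant_under shift_mat W \<and> unit_vec ndim (block_end bt) \<in> W"
  then obtain W where W: "is_subspace ndim W" and proper: "W \<noteq> carrier_vec ndim"
    and invJ: "invariant_under J W" and invS: "invariant_under shift_mat W"
    and w: "unit_vec ndim (block_end bt) \<in> W" by blast
  have "W = carrier_vec ndim"
  proof (rule subspace_eq_carrier_if_unit_vecs[OF W])
    fix x assume x: "x < ndim"
    from index_decomposition[OF x] have bx: "blk x < nblocks" "pos x < bsize (blk x)" "idx (blk x) (pos x) = x"
      by auto
    show "unit_vec ndim x \<in> W"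
      using block_in_invariant[OF invJ bx(1) block_ends_in_invariant[OF top invS w bx(1)] bx(2)] bx(3) by simp
  qed
  with proper show False ..
qed

lemma shift_mat_cyclic: "\<exists>w \<in> carrier_vec ndim. cyclic_vector_pair ndim J shift_mat w"
proof (cases "nblocks = 0")
  case True
  then have "ndim = 0" by simp
  then show ?thesis using cyclic_vector_pair_dim_0 zero_carrier_vec by metis
next
  case False
  then have "nblocks - 1 < nblocks" by simp
  then obtain bt where "bt < nblocks" "block_rank bt = nblocks - 1" by (rule block_rank_surj)
  with cyclic_block_end show ?thesis by (meson unit_vec_carrier)
qed

lemma cyclic_partner_shift_mat:
  assumes Y: "commutes_J Y" and upper: "strictly_upper (head_mat Y)"
  shows "\<exists>w. cyclic_partner ndim J Y shift_mat w"
proof -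
  have Yc: "Y \<in> carrier_mat ndim ndim" using Y by (rule commutes_J_carrier)
  have "nilpotent_mat (\<alpha> \<cdot>\<^sub>m Y + \<beta> \<cdot>\<^sub>m shift_mat)" for \<alpha> \<beta>
  proof (rule nilpotent_if_order_increasing[where key = weight])
    fix x y assume x: "x < ndim" and y: "y < ndim" and ne: "(\<alpha> \<cdot>\<^sub>m Y + \<beta> \<cdot>\<^sub>m shift_mat) $$ (x, y) \<noteq> 0"
    then have "Y $$ (x, y) \<noteq> 0 \<or> shift_mat $$ (x, y) \<noteq> 0" using Yc by auto
    then show "weight x < weight y" using weight_commutant[OF Y upper x y] weight_shift_mat[OF x y] by blast
  qed (use Yc in auto)
  moreover have "nilpotent_mat shift_mat"
    by (rule nilpotent_if_order_increasing[OF shift_mat_carrier, where key = weight]) (rule weight_shift_mat)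
  moreover have "J * shift_mat = shift_mat * J" using shift_mat_commutes_J unfolding commutes_J_def by simp
  moreover obtain w where "w \<in> carrier_vec ndim" "cyclic_vector_pair ndim J shift_mat w"
    using shift_mat_cyclic by blast
  ultimately have "cyclic_partner ndim J Y shift_mat w" unfolding cyclic_partner_def by simp
  then show ?thesis ..
qed

lemma cyclic_partner_exists:
  assumes X: "commutes_J X" and nil: "nilpotent_mat X"
  shows "\<exists>C w. cyclic_partner ndim J X C w"
proof -
  obtain S S' where S: "commutes_J S" and S': "commutes_J S'" and SS': "S * S' = 1\<^sub>m ndim"
    and S'S: "S' * S = 1\<^sub>m ndim" and upper: "strictly_upper (head_mat (S' * X * S))"
    by (rule head_mat_triangularizable[OF X nil])
  note Sc = commutes_J_carrier[OF S] and S'c = commutes_J_carrier[OF S']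
  obtain w where partner: "cyclic_partner ndim J (S' * X * S) shift_mat w"
    using cyclic_partner_shift_mat[OF commutes_J_mult[OF commutes_J_mult[OF S' X] S] upper] by blast
  have SJ: "S * J = J * S" using S unfolding commutes_J_def by simp
  have "S' * J * S = S' * (S * J)" using assoc_mult_mat[OF S'c J_carrier Sc] by (simp add: SJ)
  also have "\<dots> = J" using assoc_mult_mat[OF S'c Sc J_carrier] S'S by simp
  finally have "similar_mat_wit J J S S'" using similar_mat_wit_conj[OF Sc S'c SS' S'S J_carrier] by simp
  from cyclic_partner_similar[OF this similar_mat_wit_conj[OF Sc S'c SS' S'S commutes_J_carrier[OF X]] Sc partner]
  show ?thesis by blast
qed

end

theorem lemma2p3:
  fixes n :: nat and B1 B2 :: "complex mat"
  assumes "B1 \<in> carrier_mat n n" and "B2 \<in> carrier_mat n n"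
    and "B1 * B2 = B2 * B1"
    and "nilpotent_mat B1" and "nilpotent_mat B2"
  shows "\<exists>B2' w. B2' \<in> carrier_mat n n \<and> w \<in> carrier_vec n \<and> nilpotent_mat B2' \<and>
           B1 * B2' = B2' * B1 \<and>
           (\<forall>\<alpha> \<beta> :: complex. nilpotent_mat (\<alpha> \<cdot>\<^sub>m B2 + \<beta> \<cdot>\<^sub>m B2')) \<and>
           cyclic_vector_pair n B1 B2' w"
proof -
  obtain ms where jordan: "nilpotent_jordan ms" and n: "sum_list ms = n"
    and "similar_mat B1 (nil_jordan_mat ms)"
    by (rule nilpotent_similar_jordan[OF assms(1,4)])
  then obtain P Q where B1: "similar_mat_wit B1 (nil_jordan_mat ms) P Q" unfolding similar_mat_def by blast
  interpret nilpotent_jordan ms by (rule jordan)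
  note PQ = similar_mat_witD2[OF assms(1) B1]
  have B2: "similar_mat_wit B2 (Q * B2 * P) P Q" by (rule similar_mat_wit_conj) (use PQ assms(2) in auto)
  have "commutes_J (Q * B2 * P)"
    using similar_mat_wit_commute[OF B1 B2 PQ(6)] assms(3) PQ n unfolding commutes_J_def by auto
  moreover have "nilpotent_mat (Q * B2 * P)" using nilpotent_mat_similar[OF B2] assms(5) by simp
  ultimately obtain C w where "cyclic_partner n J (Q * B2 * P) C w"
    using cyclic_partner_exists n by blast
  from cyclic_partner_similar[OF B1 B2 PQ(6) this] show ?thesis
    unfolding cyclic_partner_def by blast
qed

end
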